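(* Fix $K\ge1$, points $\mathbf{w}_1,\dots,\mathbf{w}_K\in\mathbb{R}^2$ and constants $H>0$, $\rho_0>0$, $\sigma^2>0$, $r^*>0$, $P_c\ge0$, $E_1,\dots,E_K>0$, $\tilde P_1,\dots,\tilde P_K>0$. For $\mathbf{q}\in\mathbb{R}^2$ write $d_k=\sqrt{\|\mathbf{q}-\mathbf{w}_k\|^2+H^2}$ and $h_k=\rho_0/d_k^2$. Problem (P1): minimize $\zeta$ over $(\zeta,\mathbf{q},\mathbf{p},\pi)$, $\zeta\in\mathbb{R}$, $\mathbf q\in\mathbb{R}^2$, $\mathbf p\in\mathbb{R}^K$, $\pi$ a permutation of $\{1,\dots,K\}$, subject to, for all $m$: $p_{\pi(m)}+P_c\le\zeta E_{\pi(m)}$; $0\le p_{\pi(m)}\le\tilde P_{\pi(m)}$; $\log_2\big(1+\frac{p_{\pi(m)}h_{\pi(m)}}{\sum_{n=m+1}^Kp_{\pi(n)}h_{\pi(n)}+\sigma^2}\big)\ge r^*$; and $d_{\pi(1)}\le\dots\le d_{\pi(K)}$. Problem (P2): minimize $\zeta$ over $(\zeta,\mathbf{q},\mathbf{p},\boldsymbol\alpha)$ with $\boldsymbol\alpha=(\alpha_{k,j})_{k,j=1}^K$, subject to, for all $k$: $p_k+P_c\le\zeta E_k$; $0\le p_k\le\tilde P_k$; $\log_2\big(1+\frac{p_kh_k}{\sum_{j\ne k}\alpha_{k,j}p_jh_j+\sigma^2}\big)\ge r^*$; for all $k\ne j$: $\alpha_{k,j}=0$ if $d_k>d_j$, $\alpha_{k,j}=1$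 if $d_k<d_j$, $\alpha_{k,j}\in\{0,1\}$ if $d_k=d_j$; $\alpha_{k,k}=0$; $\alpha_{k,j}+\alpha_{j,k}=1$ for $k\ne j$; $\alpha_{k,j}+\alpha_{j,i}-1\le\alpha_{k,i}$ for all $k,j,i$. Then the optimal values of (P1) and (P2) are equal.
   Context: (P1) models maximizing the minimum device lifetime $E_k/(p_k+P_c)$ (via $\zeta=1/\text{lifetime}$) in uplink NOMA to a UAV at horizontal position $\mathbf q$ and altitude $H$ with permutation decoding order $\pi$; (P2) is the same with binary decoding-order variables ($\alpha_{k,j}=1$: device $k$ decoded before device $j$). Optimal value means the infimum of $\zeta$ over the feasible set. *)

theory Defs
  imports "HOL-Analysis.Analysis" "HOL-Combinatorics.Permutations"
begin

text \<open>Devices are indexed by 0,...,K-1 (paper: 1,...,K).  Horizontal positions are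
  vectors in real^2.\<close>

definition dev_dist :: "real \<Rightarrow> (nat \<Rightarrow> real^2) \<Rightarrow> real^2 \<Rightarrow> nat \<Rightarrow> real" where
  "dev_dist H w q k = sqrt ((norm (q - w k))\<^sup>2 + H\<^sup>2)"

definition chan_gain :: "real \<Rightarrow> real \<Rightarrow> (nat \<Rightarrow> real^2) \<Rightarrow> real^2 \<Rightarrow> nat \<Rightarrow> real" where
  "chan_gain \<rho>0 H w q k = \<rho>0 / (dev_dist H w q k)\<^sup>2"

definition P1_feasible ::
  "nat \<Rightarrow> (nat \<Rightarrow> real^2) \<Rightarrow> real \<Rightarrow> real \<Rightarrow> real \<Rightarrow> real \<Rightarrow> real \<Rightarrow> (nat \<Rightarrow> real) \<Rightarrow> (nat \<Rightarrow> real)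
   \<Rightarrow> real \<Rightarrow> real^2 \<Rightarrow> (nat \<Rightarrow> real) \<Rightarrow> (nat \<Rightarrow> nat) \<Rightarrow> bool" where
  "P1_feasible K w H \<rho>0 \<sigma>2 rstar Pc E Pmax \<zeta> q p \<pi> \<longleftrightarrow>
     \<pi> permutes {..<K} \<and>
     (\<forall>m<K.
        p (\<pi> m) + Pc \<le> \<zeta> * E (\<pi> m) \<and>
        0 \<le> p (\<pi> m) \<and> p (\<pi> m) \<le> Pmax (\<pi> m) \<and>
        log 2 (1 + p (\<pi> m) * chan_gain \<rho>0 H w q (\<pi> m) /
                   ((\<Sum>n\<in>{m+1..<K}. p (\<pi> n) * chan_gain \<rho>0 H w q (\<pi> n)) + \<sigma>2)) \<ge> rstar) \<and>
     (\<forall>m. m + 1 < K \<longrightarrow> dev_dist H w q (\<pi> m) \<le> dev_dist H w q (\<pi> (m + 1)))"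

definition P2_feasible ::
  "nat \<Rightarrow> (nat \<Rightarrow> real^2) \<Rightarrow> real \<Rightarrow> real \<Rightarrow> real \<Rightarrow> real \<Rightarrow> real \<Rightarrow> (nat \<Rightarrow> real) \<Rightarrow> (nat \<Rightarrow> real)
   \<Rightarrow> real \<Rightarrow> real^2 \<Rightarrow> (nat \<Rightarrow> real) \<Rightarrow> (nat \<Rightarrow> nat \<Rightarrow> real) \<Rightarrow> bool" where
  "P2_feasible K w H \<rho>0 \<sigma>2 rstar Pc E Pmax \<zeta> q p \<alpha> \<longleftrightarrow>
     (\<forall>k<K.
        p k + Pc \<le> \<zeta> * E k \<and>
        0 \<le> p k \<and> p k \<le> Pmax k \<and>
        log 2 (1 + p k * chan_gain \<rho>0 H w q k /
                   ((\<Sum>j\<in>{..<K} - {k}. \<alpha> k j * p j * chan_gain \<rho>0 H w q j) + \<sigma>2)) \<ge> rstar) \<and>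
     (\<forall>k<K. \<forall>j<K. k \<noteq> j \<longrightarrow>
        (dev_dist H w q k > dev_dist H w q j \<longrightarrow> \<alpha> k j = 0) \<and>
        (dev_dist H w q k < dev_dist H w q j \<longrightarrow> \<alpha> k j = 1) \<and>
        (dev_dist H w q k = dev_dist H w q j \<longrightarrow> \<alpha> k j \<in> {0, 1})) \<and>
     (\<forall>k<K. \<alpha> k k = 0) \<and>
     (\<forall>k<K. \<forall>j<K. k \<noteq> j \<longrightarrow> \<alpha> k j + \<alpha> j k = 1) \<and>
     (\<forall>k<K. \<forall>j<K. \<forall>i<K. \<alpha> k j + \<alpha> j i - 1 \<le> \<alpha> k i)"

text \<open>Optimal values = infimum of \<zeta> over the feasible set, taken in the extended reals
  (so an infeasible problem has value +\<infinity>).\<close>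
definition P1_opt where
  "P1_opt K w H \<rho>0 \<sigma>2 rstar Pc E Pmax =
     (INF \<zeta> \<in> {\<zeta>. \<exists>q p \<pi>. P1_feasible K w H \<rho>0 \<sigma>2 rstar Pc E Pmax \<zeta> q p \<pi>}. ereal \<zeta>)"

definition P2_opt where
  "P2_opt K w H \<rho>0 \<sigma>2 rstar Pc E Pmax =
     (INF \<zeta> \<in> {\<zeta>. \<exists>q p \<alpha>. P2_feasible K w H \<rho>0 \<sigma>2 rstar Pc E Pmax \<zeta> q p \<alpha>}. ereal \<zeta>)"

end

theory Submission
  imports Defs
begin

(* A decoding permutation \<pi> corresponds to the matrix
   \<alpha> k j = [inv \<pi> k < inv \<pi> j]; under this correspondence the interference terms of the two
   problems coincide, and \<pi> listing the devices by increasing distance is the same as \<alpha>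
   respecting the distance constraints.  Conversely, the constraints of (P2) make \<alpha> the
   indicator of a strict total order on the devices, and ranking each device by its number
   of predecessors recovers \<pi>. *)

definition decoded_before :: "(nat \<Rightarrow> nat) \<Rightarrow> nat \<Rightarrow> nat \<Rightarrow> real" where
  "decoded_before \<pi> k j = of_bool (inv \<pi> k < inv \<pi> j)"

definition strict_order_indicator :: "nat \<Rightarrow> (nat \<Rightarrow> nat \<Rightarrow> real) \<Rightarrow> bool" where
  "strict_order_indicator K \<alpha> \<longleftrightarrow>
     (\<forall>k<K. \<forall>j<K. k \<noteq> j \<longrightarrow> \<alpha> k j \<in> {0, 1}) \<and>
     (\<forall>k<K. \<alpha> k k = 0) \<and>
     (\<forall>k<K. \<forall>j<K. k \<noteq> j \<longrightarrow> \<alpha> k j + \<alpha> j k = 1) \<and>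
     (\<forall>k<K. \<forall>j<K. \<forall>i<K. \<alpha> k j + \<alpha> j i - 1 \<le> \<alpha> k i)"

definition predecessor_count :: "nat \<Rightarrow> (nat \<Rightarrow> nat \<Rightarrow> real) \<Rightarrow> nat \<Rightarrow> nat" where
  "predecessor_count K \<alpha> k = card {i. i < K \<and> \<alpha> i k = 1}"

lemma permutes_lessThan_all_iff:
  assumes "\<pi> permutes {..<K}"
  shows "(\<forall>k<K. P k) \<longleftrightarrow> (\<forall>m<K. P (\<pi> m))"
  using permutes_image[OF assms] by (metis imageI lessThan_iff imageE)

lemma lift_Suc_mono_le_below:
  fixes f :: "nat \<Rightarrow> 'a::preorder"
  assumes "\<forall>m. m + 1 < K \<longrightarrow> f m \<le> f (m + 1)" and "m \<le> n" and "n < K"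
  shows "f m \<le> f n"
  using assms(2,3)
proof (induction n)
  case (Suc n)
  then show ?case
    using assms(1) by (cases "m = Suc n") (auto intro: order.trans)
qed simp

lemma sum_over_later_positions:
  fixes f :: "nat \<Rightarrow> 'a::comm_semiring_1"
  assumes \<pi>: "\<pi> permutes {..<K}" and "m < K"
  shows "(\<Sum>j\<in>{..<K} - {\<pi> m}. of_bool (m < inv \<pi> j) * f j) = (\<Sum>n\<in>{m+1..<K}. f (\<pi> n))"
proof -
  have "inj_on \<pi> ({..<K} - {m})"
    using permutes_inj_on[OF \<pi>] by (rule inj_on_subset) auto
  moreover have "\<pi> ` ({..<K} - {m}) = {..<K} - {\<pi> m}"
    using permutes_image[OF \<pi>] permutes_inj[OF \<pi>] by (simp add: image_set_diff)
  ultimately have "(\<Sum>j\<in>{..<K} - {\<pi> m}. of_bool (m < inv \<pi> j) * f j)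
      = (\<Sum>n\<in>{..<K} - {m}. of_bool (m < inv \<pi> (\<pi> n)) * f (\<pi> n))"
    by (metis (no_types, lifting) sum.reindex_cong)
  also have "\<dots> = (\<Sum>n\<in>{..<K} - {m}. if m < n then f (\<pi> n) else 0)"
    by (intro sum.cong refl) (simp add: permutes_inverses(2)[OF \<pi>])
  also have "\<dots> = (\<Sum>n\<in>{m+1..<K}. f (\<pi> n))"
    by (rule sum.mono_neutral_cong_right) auto
  finally show ?thesis .
qed

lemma decoded_before_strict_order_indicator:
  assumes \<pi>: "\<pi> permutes {..<K}"
  shows "strict_order_indicator K (decoded_before \<pi>)"
proof -
  have total: "inv \<pi> k < inv \<pi> j \<or> inv \<pi> j < inv \<pi> k" if "k \<noteq> j" for k j
    using that by (metis permutes_inverses(1)[OF \<pi>] linorder_neqE_nat)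
  show ?thesis
    unfolding strict_order_indicator_def decoded_before_def by (auto dest: total)
qed

lemma predecessor_count_less_iff:
  assumes \<alpha>: "strict_order_indicator K \<alpha>" and "k < K" and "j < K"
  shows "predecessor_count K \<alpha> k < predecessor_count K \<alpha> j \<longleftrightarrow> \<alpha> k j = 1"
proof -
  have binary: "\<And>k j. k < K \<Longrightarrow> j < K \<Longrightarrow> k \<noteq> j \<Longrightarrow> \<alpha> k j \<in> {0, 1}"
    and diag: "\<And>k. k < K \<Longrightarrow> \<alpha> k k = 0"
    and anti: "\<And>k j. k < K \<Longrightarrow> j < K \<Longrightarrow> k \<noteq> j \<Longrightarrow> \<alpha> k j + \<alpha> j k = 1"
    and transitive: "\<And>i k j. i < K \<Longrightarrow> k < K \<Longrightarrow> j < K \<Longrightarrow> \<alpha> i k + \<alpha> k j - 1 \<le> \<alpha> i j"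
    using \<alpha> unfolding strict_order_indicator_def by blast+
  have less: "predecessor_count K \<alpha> k < predecessor_count K \<alpha> j"
    if k: "k < K" and j: "j < K" and kj: "\<alpha> k j = 1" for k j
  proof -
    have "{i. i < K \<and> \<alpha> i k = 1} \<subset> {i. i < K \<and> \<alpha> i j = 1}"
    proof -
      have "k \<noteq> j"
        using kj diag[OF k] by auto
      then have "\<alpha> j k = 0"
        using anti[OF k j] kj by simp
      moreover have "\<alpha> i j = 1" if "i < K" "\<alpha> i k = 1" for i
      proof -
        have "i \<noteq> j"
          using that(2) \<open>\<alpha> j k = 0\<close> by auto
        then show ?thesis
          using transitive[OF that(1) k j] binary[OF that(1) j] that(2) kj by auto
      qed
      ultimately have "{i. i < K \<and> \<alpha> i k = 1} \<subseteq> {i. i < K \<and> \<alpha> i j = 1}"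
        by auto
      moreover have "k \<in> {i. i < K \<and> \<alpha> i j = 1} - {i. i < K \<and> \<alpha> i k = 1}"
        using kj diag[OF k] k by simp
      ultimately show ?thesis
        by blast
    qed
    then show ?thesis
      unfolding predecessor_count_def by (rule psubset_card_mono[rotated]) simp
  qed
  show ?thesis
  proof
    assume lt: "predecessor_count K \<alpha> k < predecessor_count K \<alpha> j"
    show "\<alpha> k j = 1"
    proof (rule ccontr)
      assume "\<alpha> k j \<noteq> 1"
      moreover have "k \<noteq> j"
        using lt by auto
      ultimately have "\<alpha> j k = 1"
        using anti[OF assms(2,3)] binary[OF assms(2,3)] by auto
      with lt show False
        using less[OF assms(3,2)] by simp
    qed
  qed (rule less[OF assms(2,3)])
qed

lemma predecessor_count_less:
  assumes "strict_order_indicator K \<alpha>" and "k < K"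
  shows "predecessor_count K \<alpha> k < K"
proof -
  have "{i. i < K \<and> \<alpha> i k = 1} \<subseteq> {..<K} - {k}"
    using assms unfolding strict_order_indicator_def by auto
  then have "predecessor_count K \<alpha> k \<le> card ({..<K} - {k})"
    unfolding predecessor_count_def by (intro card_mono) auto
  then show ?thesis
    using assms(2) by simp
qed

lemma strict_order_indicator_imp_decoded_before:
  assumes \<alpha>: "strict_order_indicator K \<alpha>"
  obtains \<pi> where "\<pi> permutes {..<K}" and "\<forall>k<K. \<forall>j<K. \<alpha> k j = decoded_before \<pi> k j"
proof -
  define \<rho> where "\<rho> k = (if k < K then predecessor_count K \<alpha> k else k)" for k
  have binary: "\<alpha> k j = of_bool (\<alpha> k j = 1)" if "k < K" "j < K" for k j
    using \<alpha> that unfolding strict_order_indicator_def by (cases "k = j") auto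
  have anti: "\<alpha> k j + \<alpha> j k = 1" if "k < K" "j < K" "k \<noteq> j" for k j
    using \<alpha> that unfolding strict_order_indicator_def by blast
  have less_iff: "\<rho> k < \<rho> j \<longleftrightarrow> \<alpha> k j = 1" if "k < K" "j < K" for k j
    using predecessor_count_less_iff[OF \<alpha> that] that by (simp add: \<rho>_def)
  have "inj_on \<rho> {..<K}"
  proof (rule inj_onI)
    fix k j assume k: "k \<in> {..<K}" and j: "j \<in> {..<K}" and "\<rho> k = \<rho> j"
    then have "\<alpha> k j = 0" "\<alpha> j k = 0"
      using less_iff[of k j] less_iff[of j k] binary[of k j] binary[of j k] by auto
    then show "k = j"
      using anti k j by fastforce
  qed
  moreover have "\<rho> ` {..<K} \<subseteq> {..<K}"
    using predecessor_count_less[OF \<alpha>] by (auto simp: \<rho>_def)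
  ultimately have "bij_betw \<rho> {..<K} {..<K}"
    by (simp add: bij_betw_def endo_inj_surj)
  then have \<rho>: "\<rho> permutes {..<K}"
    by (rule bij_imp_permutes) (simp add: \<rho>_def)
  show ?thesis
  proof
    show "inv \<rho> permutes {..<K}"
      using permutes_inv[OF \<rho>] .
    show "\<forall>k<K. \<forall>j<K. \<alpha> k j = decoded_before (inv \<rho>) k j"
      using binary less_iff by (simp add: decoded_before_def inv_inv_eq[OF permutes_bij[OF \<rho>]])
  qed
qed

lemma decoded_before_distance_iff:
  fixes d :: "nat \<Rightarrow> real"
  assumes \<pi>: "\<pi> permutes {..<K}"
  shows "(\<forall>m. m + 1 < K \<longrightarrow> d (\<pi> m) \<le> d (\<pi> (m + 1))) \<longleftrightarrow>
    (\<forall>k<K. \<forall>j<K. k \<noteq> j \<longrightarrow>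
        (d k > d j \<longrightarrow> decoded_before \<pi> k j = 0) \<and>
        (d k < d j \<longrightarrow> decoded_before \<pi> k j = 1) \<and>
        (d k = d j \<longrightarrow> decoded_before \<pi> k j \<in> {0, 1}))"
    (is "?sorted \<longleftrightarrow> ?respects")
proof
  assume sorted: ?sorted
  have le: "d k \<le> d j" if "k < K" "j < K" "inv \<pi> k < inv \<pi> j" for k j
    using lift_Suc_mono_le_below[of K "d \<circ> \<pi>" "inv \<pi> k" "inv \<pi> j"] sorted that
      permutes_in_image[OF permutes_inv[OF \<pi>]] by (simp add: permutes_inverses(1)[OF \<pi>])
  show ?respects
  proof (intro allI impI)
    fix k j assume "k < K" "j < K" "k \<noteq> j"
    moreover from \<open>k \<noteq> j\<close> have "inv \<pi> k \<noteq> inv \<pi> j"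
      by (metis permutes_inverses(1)[OF \<pi>])
    ultimately show "(d k > d j \<longrightarrow> decoded_before \<pi> k j = 0) \<and>
        (d k < d j \<longrightarrow> decoded_before \<pi> k j = 1) \<and>
        (d k = d j \<longrightarrow> decoded_before \<pi> k j \<in> {0, 1})"
      using le[of k j] le[of j k] by (auto simp: decoded_before_def linorder_neq_iff)
  qed
next
  assume respects: ?respects
  show ?sorted
  proof (intro allI impI)
    fix m assume "m + 1 < K"
    then have "\<pi> m < K" "\<pi> (m + 1) < K"
      using permutes_in_image[OF \<pi>] by auto
    moreover have "\<pi> m \<noteq> \<pi> (m + 1)"
      using permutes_inj[OF \<pi>] by (simp add: inj_eq)
    moreover have "decoded_before \<pi> (\<pi> m) (\<pi> (m + 1)) = 1"
      by (simp add: decoded_before_def permutes_inverses(2)[OF \<pi>])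
    ultimately show "d (\<pi> m) \<le> d (\<pi> (m + 1))"
      using respects by force
  qed
qed

lemma P1_feasible_iff_P2_feasible_decoded_before:
  "P1_feasible K w H \<rho>0 \<sigma>2 rstar Pc E Pmax \<zeta> q p \<pi> \<longleftrightarrow>
     \<pi> permutes {..<K} \<and> P2_feasible K w H \<rho>0 \<sigma>2 rstar Pc E Pmax \<zeta> q p (decoded_before \<pi>)"
proof (cases "\<pi> permutes {..<K}")
  case True
  define g where "g = chan_gain \<rho>0 H w q"
  define device_ok where "device_ok k I \<longleftrightarrow> p k + Pc \<le> \<zeta> * E k \<and> 0 \<le> p k \<and> p k \<le> Pmax k \<and>
      rstar \<le> log 2 (1 + p k * g k / (I + \<sigma>2))" for k I
  have interference: "(\<Sum>j\<in>{..<K} - {\<pi> m}. decoded_before \<pi> (\<pi> m) j * p j * g j)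
      = (\<Sum>n\<in>{m+1..<K}. p (\<pi> n) * g (\<pi> n))" if "m < K" for m
    using sum_over_later_positions[OF True that, of "\<lambda>j. p j * g j"]
    by (simp add: decoded_before_def permutes_inverses(2)[OF True] mult.assoc)
  have "(\<forall>k<K. device_ok k (\<Sum>j\<in>{..<K} - {k}. decoded_before \<pi> k j * p j * g j))
      \<longleftrightarrow> (\<forall>m<K. device_ok (\<pi> m) (\<Sum>j\<in>{..<K} - {\<pi> m}. decoded_before \<pi> (\<pi> m) j * p j * g j))"
    by (rule permutes_lessThan_all_iff[OF True])
  also have "\<dots> \<longleftrightarrow> (\<forall>m<K. device_ok (\<pi> m) (\<Sum>n\<in>{m+1..<K}. p (\<pi> n) * g (\<pi> n)))"
    using interference by simp
  finally show ?thesis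
    using True decoded_before_distance_iff[OF True] decoded_before_strict_order_indicator[OF True]
    unfolding P1_feasible_def P2_feasible_def strict_order_indicator_def
    by (simp add: device_ok_def g_def)
qed (simp add: P1_feasible_def)

lemma P2_feasible_cong:
  assumes "\<forall>k<K. \<forall>j<K. \<alpha> k j = \<beta> k j"
  shows "P2_feasible K w H \<rho>0 \<sigma>2 rstar Pc E Pmax \<zeta> q p \<alpha> \<longleftrightarrow>
    P2_feasible K w H \<rho>0 \<sigma>2 rstar Pc E Pmax \<zeta> q p \<beta>"
proof -
  have "(\<Sum>j\<in>{..<K} - {k}. \<alpha> k j * f j) = (\<Sum>j\<in>{..<K} - {k}. \<beta> k j * f j)" if "k < K" for k f
    using assms that by (intro sum.cong) auto
  then show ?thesis
    using assms unfolding P2_feasible_def by (simp add: mult.assoc)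
qed

lemma P2_feasible_imp_strict_order_indicator:
  assumes "P2_feasible K w H \<rho>0 \<sigma>2 rstar Pc E Pmax \<zeta> q p \<alpha>"
  shows "strict_order_indicator K \<alpha>"
proof -
  let ?d = "dev_dist H w q"
  have distance: "\<forall>k<K. \<forall>j<K. k \<noteq> j \<longrightarrow>
        (?d k > ?d j \<longrightarrow> \<alpha> k j = 0) \<and> (?d k < ?d j \<longrightarrow> \<alpha> k j = 1) \<and>
        (?d k = ?d j \<longrightarrow> \<alpha> k j \<in> {0, 1})"
    and order: "(\<forall>k<K. \<alpha> k k = 0) \<and> (\<forall>k<K. \<forall>j<K. k \<noteq> j \<longrightarrow> \<alpha> k j + \<alpha> j k = 1) \<and>
        (\<forall>k<K. \<forall>j<K. \<forall>i<K. \<alpha> k j + \<alpha> j i - 1 \<le> \<alpha> k i)"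
    using assms unfolding P2_feasible_def by blast+
  have "\<alpha> k j \<in> {0, 1}" if "k < K" "j < K" "k \<noteq> j" for k j
    using distance that by (cases "?d k" "?d j" rule: linorder_cases) auto
  with order show ?thesis
    unfolding strict_order_indicator_def by blast
qed

theorem proposition4:
  fixes K :: nat and w :: "nat \<Rightarrow> real^2"
    and H \<rho>0 \<sigma>2 rstar Pc :: real and E Pmax :: "nat \<Rightarrow> real"
  assumes "K \<ge> 1" and "H > 0" and "\<rho>0 > 0" and "\<sigma>2 > 0" and "rstar > 0" and "Pc \<ge> 0"
    and "\<forall>k<K. E k > 0" and "\<forall>k<K. Pmax k > 0"
  shows "P1_opt K w H \<rho>0 \<sigma>2 rstar Pc E Pmax = P2_opt K w H \<rho>0 \<sigma>2 rstar Pc E Pmax"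
proof -
  have "(\<exists>q p \<pi>. P1_feasible K w H \<rho>0 \<sigma>2 rstar Pc E Pmax \<zeta> q p \<pi>) \<longleftrightarrow>
      (\<exists>q p \<alpha>. P2_feasible K w H \<rho>0 \<sigma>2 rstar Pc E Pmax \<zeta> q p \<alpha>)" for \<zeta>
  proof
    assume "\<exists>q p \<pi>. P1_feasible K w H \<rho>0 \<sigma>2 rstar Pc E Pmax \<zeta> q p \<pi>"
    then show "\<exists>q p \<alpha>. P2_feasible K w H \<rho>0 \<sigma>2 rstar Pc E Pmax \<zeta> q p \<alpha>"
      using P1_feasible_iff_P2_feasible_decoded_before by blast
  next
    assume "\<exists>q p \<alpha>. P2_feasible K w H \<rho>0 \<sigma>2 rstar Pc E Pmax \<zeta> q p \<alpha>"
    then obtain q p \<alpha> where feasible: "P2_feasible K w H \<rho>0 \<sigma>2 rstar Pc E Pmax \<zeta> q p \<alpha>"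
      by blast
    obtain \<pi> where \<pi>: "\<pi> permutes {..<K}" and "\<forall>k<K. \<forall>j<K. \<alpha> k j = decoded_before \<pi> k j"
      using strict_order_indicator_imp_decoded_before
        [OF P2_feasible_imp_strict_order_indicator[OF feasible]] .
    then have "P2_feasible K w H \<rho>0 \<sigma>2 rstar Pc E Pmax \<zeta> q p (decoded_before \<pi>)"
      using feasible P2_feasible_cong by blast
    then have "P1_feasible K w H \<rho>0 \<sigma>2 rstar Pc E Pmax \<zeta> q p \<pi>"
      using \<pi> P1_feasible_iff_P2_feasible_decoded_before by blast
    then show "\<exists>q p \<pi>. P1_feasible K w H \<rho>0 \<sigma>2 rstar Pc E Pmax \<zeta> q p \<pi>"
      by blast
  qed
  then show ?thesis
    unfolding P1_opt_def P2_opt_def by simp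
qed

end
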